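(* Let $(F_n)_{n\ge 0}$ be the Fibonacci numbers, $F_0=0$, $F_1=F_2=1$, $F_{n+2}=F_{n+1}+F_n$. Let $\mathbf{P}$ be the Fibonacci cobweb poset on the set of positive integers, defined as follows: for $k\ge 1$ the $k$-th level is the set $\Phi_k=\{x\in\mathbb{N}: F_{k+1}\le x\le F_{k+2}-1\}$ (so $|\Phi_k|=F_k$, and the levels partition $\{1,2,3,\dots\}$), and for $x\in\Phi_k$, $y\in\Phi_n$ we have $x\le y$ in $\mathbf{P}$ if and only if $x=y$ or $k<n$. Let $\mu$ be the M\"obius function of $\mathbf{P}$, i.e. the function on pairs of elements of $\mathbf{P}$ determined by $\mu(x,x)=1$ for all $x$, $\mu(x,y)=-\sum_{z:\,x\le z<y}\mu(x,z)$ for $x<y$, and $\mu(x,y)=0$ when $x\not\le y$. Then for $x\in\Phi_k$ and $y\in\Phi_n$: $$\mu(x,y)=\begin{cases} 0 & \text{if } x>y \text{ (as integers)},\\ 1 & \text{if } x=y,\\ 0 & \text{if } n=k \text{ and } x\neq y,\\ -1 & \text{if } n=k+1,\\ -\prod_{l=k+1}^{n-1}(1-F_l) & \text{if } n>k+1.\end{cases}$$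
   Context: The M\"obius function $\mu$ of a locally finite poset is the inverse of its zeta function $\zeta$ ($\zeta(x,y)=1$ if $x\le y$, $0$ otherwise) in the incidence algebra, where the product is $(f*g)(x,y)=\sum_{x\le z\le y}f(x,z)g(z,y)$; equivalently it is given by the recursion stated in the claim. In the cobweb poset, every element of level $k$ is below every element of every higher level, and distinct elements of the same level are incomparable. *)

theory Defs
  imports Main "HOL-Number_Theory.Fib"
begin

definition Phi :: "nat \<Rightarrow> nat set" where
  "Phi k = {x. fib (k + 1) \<le> x \<and> x \<le> fib (k + 2) - 1}"

definition cob_le :: "nat \<Rightarrow> nat \<Rightarrow> bool" where
  "cob_le x y \<longleftrightarrow> x \<ge> 1 \<and> y \<ge> 1 \<and>
     (x = y \<or> (\<exists>k n. k \<ge> 1 \<and> n \<ge> 1 \<and> x \<in> Phi k \<and> y \<in> Phi n \<and> k < n))"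

definition cob_lt :: "nat \<Rightarrow> nat \<Rightarrow> bool" where
  "cob_lt x y \<longleftrightarrow> cob_le x y \<and> x \<noteq> y"

definition is_cob_moebius :: "(nat \<Rightarrow> nat \<Rightarrow> int) \<Rightarrow> bool" where
  "is_cob_moebius mu \<longleftrightarrow>
     (\<forall>x. x \<ge> 1 \<longrightarrow> mu x x = 1) \<and>
     (\<forall>x y. cob_lt x y \<longrightarrow> mu x y = - (\<Sum>z \<in> {z. cob_le x z \<and> cob_lt z y}. mu x z)) \<and>
     (\<forall>x y. x \<ge> 1 \<longrightarrow> y \<ge> 1 \<longrightarrow> \<not> cob_le x y \<longrightarrow> mu x y = 0)"

end

theory Submission
  imports Defs
begin

(* For x in level k and y in level n with k < n, the half-open interval [x, y) of the cobweb
   poset is x together with the full levels strictly between k and n. By induction on n, mu(x, z)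
   then depends only on the level m of z; writing it as -P(m), the defining recursion becomes
   P(n) = 1 - (sum over k < m < n of F_m P(m)), which telescopes to the product of (1 - F_l)
   over k < l < n. *)

lemma prod_one_minus_telescope:
  fixes f :: "nat \<Rightarrow> 'a::comm_ring_1"
  shows "1 - (\<Sum>m\<in>{k<..<n}. f m * (\<Prod>l\<in>{k<..<m}. 1 - f l)) = (\<Prod>l\<in>{k<..<n}. 1 - f l)"
proof (induction n)
  case (Suc n)
  show ?case
  proof (cases "k < n")
    case True
    then have "{k<..<Suc n} = insert n {k<..<n}" by auto
    with Suc.IH show ?thesis by (simp add: algebra_simps)
  next
    case False
    then have "{k<..<Suc n} = {}" by auto
    then show ?thesis by simp
  qed
qed simp

lemma Phi_eq_atLeastLessThan: "Phi m = {fib (m + 1)..<fib (m + 2)}"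
  using fib_neq_0_nat[of "m + 2"] unfolding Phi_def by auto

lemma card_Phi: "card (Phi m) = fib m"
  by (simp add: Phi_eq_atLeastLessThan fib_plus_2)

lemma finite_Phi: "finite (Phi m)"
  by (simp add: Phi_eq_atLeastLessThan)

lemma Phi_pos: "z \<in> Phi m \<Longrightarrow> 0 < z"
  using fib_neq_0_nat[of "m + 1"] by (simp add: Phi_eq_atLeastLessThan)

lemma Phi_less:
  assumes "k < m" "x \<in> Phi k" "z \<in> Phi m"
  shows "x < z"
proof -
  have "fib (k + 2) \<le> fib (m + 1)" using assms(1) by (intro fib_mono) simp
  with assms(2,3) show ?thesis by (simp add: Phi_eq_atLeastLessThan)
qed

lemma Phi_level_unique: "x \<in> Phi k \<Longrightarrow> x \<in> Phi m \<Longrightarrow> k = m"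
  by (metis Phi_less less_irrefl linorder_neqE_nat)

lemma cob_le_Phi_iff:
  assumes "k \<ge> 1" "n \<ge> 1" "x \<in> Phi k" "y \<in> Phi n"
  shows "cob_le x y \<longleftrightarrow> x = y \<or> k < n"
  using assms Phi_pos[OF assms(3)] Phi_pos[OF assms(4)] Phi_level_unique
  unfolding cob_le_def by (metis One_nat_def Suc_leI)

lemma cob_interval_levels:
  assumes "k \<ge> 1" "k < n" "x \<in> Phi k" "y \<in> Phi n"
  shows "{z. cob_le x z \<and> cob_lt z y} = insert x (\<Union>m\<in>{k<..<n}. Phi m)"
proof (intro set_eqI iffI)
  fix z assume "z \<in> {z. cob_le x z \<and> cob_lt z y}"
  then have "cob_le x z" "cob_lt z y" by auto
  then obtain m where "m \<ge> 1" "z \<in> Phi m"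
    unfolding cob_lt_def cob_le_def by blast
  with assms \<open>cob_le x z\<close> \<open>cob_lt z y\<close> have "z = x \<or> k < m \<and> m < n"
    unfolding cob_lt_def by (auto simp: cob_le_Phi_iff[of k m] cob_le_Phi_iff[of m n])
  with \<open>z \<in> Phi m\<close> show "z \<in> insert x (\<Union>m\<in>{k<..<n}. Phi m)" by auto
next
  fix z assume "z \<in> insert x (\<Union>m\<in>{k<..<n}. Phi m)"
  then consider "z = x" | m where "k < m" "m < n" "z \<in> Phi m" by auto
  then show "z \<in> {z. cob_le x z \<and> cob_lt z y}"
  proof cases
    case 1
    with assms show ?thesis
      using Phi_less[OF assms(2-4)]
      by (simp add: cob_lt_def cob_le_Phi_iff[of k n] cob_le_Phi_iff[of k k])
  next
    case 2
    with assms show ?thesis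
      using Phi_less[OF \<open>m < n\<close> \<open>z \<in> Phi m\<close> assms(4)]
      by (simp add: cob_lt_def cob_le_Phi_iff[of k m] cob_le_Phi_iff[of m n])
  qed
qed

lemma cob_moebius_diag:
  assumes "is_cob_moebius mu" "x \<in> Phi k"
  shows "mu x x = 1"
  using assms Phi_pos[OF assms(2)] unfolding is_cob_moebius_def by simp

lemma cob_moebius_not_above:
  assumes "is_cob_moebius mu" "k \<ge> 1" "n \<ge> 1" "x \<in> Phi k" "y \<in> Phi n"
    and "\<not> k < n" "x \<noteq> y"
  shows "mu x y = 0"
  using assms Phi_pos[OF assms(4)] Phi_pos[OF assms(5)] cob_le_Phi_iff[OF assms(2-5)]
  unfolding is_cob_moebius_def by simp

lemma cob_moebius_above:
  assumes mu: "is_cob_moebius mu" and k: "k \<ge> 1" "x \<in> Phi k"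
  shows "k < n \<Longrightarrow> y \<in> Phi n \<Longrightarrow> mu x y = - (\<Prod>l\<in>{k<..<n}. 1 - int (fib l))"
proof (induction n arbitrary: y rule: less_induct)
  case (less n)
  let ?P = "\<lambda>m. \<Prod>l\<in>{k<..<m}. 1 - int (fib l)"
  let ?between = "\<Union>m\<in>{k<..<n}. Phi m"
  have "cob_lt x y"
    using less.prems k Phi_less[OF less.prems(1) k(2) less.prems(2)]
    by (simp add: cob_lt_def cob_le_Phi_iff[of k n])
  then have "mu x y = - (\<Sum>z\<in>insert x ?between. mu x z)"
    using mu cob_interval_levels[OF k(1) less.prems(1) k(2) less.prems(2)]
    unfolding is_cob_moebius_def by simp
  also have "\<dots> = - (1 + (\<Sum>z\<in>?between. mu x z))"
  proof -
    have "x \<notin> ?between" using k(2) Phi_level_unique by fastforce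
    then show ?thesis
      using cob_moebius_diag[OF mu k(2)] by (simp add: finite_Phi)
  qed
  also have "(\<Sum>z\<in>?between. mu x z) = (\<Sum>m\<in>{k<..<n}. \<Sum>z\<in>Phi m. mu x z)"
    by (rule sum.UNION_disjoint) (auto simp: finite_Phi Phi_level_unique)
  also have "\<dots> = (\<Sum>m\<in>{k<..<n}. - (int (fib m) * ?P m))"
  proof (rule sum.cong)
    fix m assume "m \<in> {k<..<n}"
    then have "\<forall>z\<in>Phi m. mu x z = - ?P m" using less.IH by simp
    then show "(\<Sum>z\<in>Phi m. mu x z) = - (int (fib m) * ?P m)" by (simp add: card_Phi)
  qed simp
  finally show ?case
    using prod_one_minus_telescope[of "\<lambda>l. int (fib l)" k n] by (simp add: sum_negf)
qed

theorem mainTheorem1: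
  fixes mu :: "nat \<Rightarrow> nat \<Rightarrow> int" and x y k n :: nat
  assumes "is_cob_moebius mu"
    and "k \<ge> 1" and "n \<ge> 1" and "x \<in> Phi k" and "y \<in> Phi n"
  shows "(x > y \<longrightarrow> mu x y = 0) \<and>
         (x = y \<longrightarrow> mu x y = 1) \<and>
         (n = k \<and> x \<noteq> y \<longrightarrow> mu x y = 0) \<and>
         (n = k + 1 \<longrightarrow> mu x y = -1) \<and>
         (n > k + 1 \<longrightarrow> mu x y = - (\<Prod>l = k + 1..n - 1. (1 - int (fib l))))"
proof -
  have "x > y \<Longrightarrow> \<not> k < n" using Phi_less assms(4,5) by fastforce
  then have incomparable: "x > y \<or> n = k \<and> x \<noteq> y \<Longrightarrow> mu x y = 0"
    using cob_moebius_not_above[OF assms] by auto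
  have "{k + 1..n - 1} = {k<..<n}" using assms(3) by auto
  then have "k < n \<Longrightarrow> mu x y = - (\<Prod>l = k + 1..n - 1. (1 - int (fib l)))"
    using cob_moebius_above[OF assms(1,2,4) _ assms(5)] by simp
  then show ?thesis
    using incomparable cob_moebius_diag[OF assms(1,4)] by auto
qed

end
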